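(* Let $\Omega\subseteq\mathbb R^n$ be open and bounded, $0<d<n$, $p=n/d$, $\frac1p+\frac1{p'}=1$, and let $K:\Omega\times\Omega\to[-\infty,\infty]$ be measurable with $K(x,y)=g\big(x,\frac{y-x}{|y-x|}\big)|x-y|^{d-n}+O(|x-y|^{d-n+\epsilon})$, where $g:\Omega\times S^{n-1}\to\mathbb R$ is bounded and measurable, $\epsilon>0$, and the $O$-term is bounded by $C''|x-y|^{d-n+\epsilon}$ uniformly in $x,y$. Let $A=\frac1n\sup_{x\in\Omega}\int_{S^{n-1}}|g(x,\omega)|^{p'}d\omega$. Then there is $\sigma>0$ such that for $s>0$ $$\sup_{x\in\Omega}\big|\{y\in\Omega:|K(x,y)|>s\}\big|\le As^{-p'}+O(s^{-p'-\sigma}),$$ with equality (i.e. $\sup_{x\in\Omega}|\{y\in\Omega:|K(x,y)|>s\}|=As^{-p'}+O(s^{-p'-\sigma})$) if the supremum defining $A$ is attained in $\Omega$. Moreover there is $C$ with $$\sup_{y\in\Omega}\big|\{x\in\Omega:|K(x,y)|>s\}\big|\le Cs^{-p'}.$$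
   Context: $|E|$ denotes Lebesgue measure; $S^{n-1}$ is the unit sphere of $\mathbb R^n$ with surface measure $d\omega$. $O(s^{-p'-\sigma})$ denotes a quantity bounded in absolute value by $C's^{-p'-\sigma}$ with $C'$ independent of $s$. *)

theory Defs
  imports "HOL-Analysis.Analysis"
begin

text \<open>Surface measure on the unit sphere of an n-dimensional Euclidean space,
  defined as the cone measure: for E contained in the sphere,
  sigma(E) = n * |{t w : 0 < t <= 1, w in E}|.  This coincides with the
  standard surface (Hausdorff) measure.\<close>
definition sphere_measure :: "'a::euclidean_space measure" where
  "sphere_measure =
     scale_measure (of_nat DIM('a))
       (distr (restrict_space lborel (ball 0 1 - {0}))
              (restrict_space borel (sphere 0 1))
              (\<lambda>x. x /\<^sub>R norm x))"

end

theory Submission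
  imports Defs "HOL-Real_Asymp.Real_Asymp"
begin

text \<open>Write q = n - d, so that p' = n/q, and r = |y - x|, \<omega> = (y - x)/r.  Since
  K(x,y) = g(x,\<omega>) r^{-q} + O(r^{-q+\<epsilon>}), for large s and \<delta> = C s^{-\<sigma>}, \<sigma> = \<epsilon>/(2q), the set
  {y. |K(x,y)| > s} lies in the star-shaped region about x of radius ((|g(x,\<omega>)| + \<delta>)/s)^{1/q},
  and contains the one of radius ((|g(x,\<omega>)| - \<delta>)/s)^{1/q} once the latter fits into \<Omega>.  In polar
  coordinates a star-shaped region of radius \<rho> has volume (1/n) \<integral> \<rho>^n over the sphere, and here
  \<rho>^n = s^{-p'} (|g| \<plusminus> \<delta>)^{p'}; as t^{p'} is Lipschitz on bounded sets, both volumes are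
  A(x) s^{-p'} + O(s^{-p'-\<sigma>}).  For small s the volume of \<Omega> is itself O(s^{-p'-\<sigma>}).  For the
  estimate in x, |g| \<le> B and |y - x| \<le> D confine the superlevel set to a ball of radius
  ((B + C D^\<epsilon>)/s)^{1/q}.\<close>

section \<open>Polar coordinates\<close>

lemma ball_in_borel[measurable]: "ball (c::'a::euclidean_space) r \<in> sets borel"
  by simp

lemma nn_integral_power_tail:
  fixes a :: real and N :: nat
  assumes a: "0 < a" and N: "1 \<le> N"
  shows "(\<integral>\<^sup>+l. indicator {a<..} l * ennreal (real N * a ^ N / l ^ (N + 1)) \<partial>lborel) = 1"
proof -
  have "(\<integral>\<^sup>+l. ennreal (real N * a ^ N / l ^ (N + 1)) * indicator {a..} l \<partial>lborel)
        = ennreal (0 - (- (a ^ N / a ^ N)))"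
  proof (rule nn_integral_FTC_atLeast[where F = "\<lambda>l. - (a ^ N / l ^ N)"])
    show "(\<lambda>l. real N * a ^ N / l ^ (N + 1)) \<in> borel_measurable borel" by measurable
    fix l assume "a \<le> l"
    then have l: "0 < l" using a by auto
    show "0 \<le> real N * a ^ N / l ^ (N + 1)" using l a by simp
    show "((\<lambda>l. - (a ^ N / l ^ N)) has_real_derivative real N * a ^ N / l ^ (N + 1)) (at l)"
      using l N by (auto intro!: derivative_eq_intros) (simp add: field_simps, cases N, simp_all add: field_simps)
  next
    show "((\<lambda>l. - (a ^ N / l ^ N)) \<longlongrightarrow> 0) at_top"
      using N by real_asymp
  qed
  also have "\<dots> = 1" using a by simp
  finally have tail: "(\<integral>\<^sup>+l. ennreal (real N * a ^ N / l ^ (N + 1)) * indicator {a..} l \<partial>lborel) = 1" .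
  have "AE l in lborel. indicator {a<..} l * ennreal (real N * a ^ N / l ^ (N + 1))
      = ennreal (real N * a ^ N / l ^ (N + 1)) * indicator {a..} l"
    using AE_lborel_singleton[of a] by eventually_elim (auto simp: indicator_def)
  then show ?thesis unfolding tail[symmetric] by (rule nn_integral_cong_AE)
qed

lemma nn_integral_lborel_scale:
  fixes F :: "'a::euclidean_space \<Rightarrow> ennreal"
  assumes [measurable]: "F \<in> borel_measurable borel" and l: "0 < l"
  shows "(\<integral>\<^sup>+z. F z \<partial>lborel) = ennreal (l ^ DIM('a)) * (\<integral>\<^sup>+u. F (l *\<^sub>R u) \<partial>lborel)"
proof -
  have "(\<integral>\<^sup>+z. F z \<partial>lborel)
      = (\<integral>\<^sup>+z. F z \<partial>density (distr lborel borel (\<lambda>x. 0 + l *\<^sub>R x)) (\<lambda>_. \<bar>l\<bar> ^ DIM('a)))"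
    using lborel_affine[of l "0::'a"] l by simp
  also have "\<dots> = ennreal (l ^ DIM('a)) * (\<integral>\<^sup>+u. F (l *\<^sub>R u) \<partial>lborel)"
    using l by (simp add: nn_integral_density nn_integral_distr nn_integral_cmult)
  finally show ?thesis .
qed

lemma nn_integral_lborel_translate:
  fixes F :: "'a::euclidean_space \<Rightarrow> ennreal"
  assumes [measurable]: "F \<in> borel_measurable borel"
  shows "(\<integral>\<^sup>+z. F z \<partial>lborel) = (\<integral>\<^sup>+z. F (c + z) \<partial>lborel)"
  by (subst lborel_distr_plus[symmetric, of c]) (simp add: nn_integral_distr)

lemma nn_integral_ray_rescale:
  fixes F :: "'a::euclidean_space \<Rightarrow> ennreal" and u :: 'a
  assumes [measurable]: "F \<in> borel_measurable borel" and u: "u \<noteq> 0"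
  shows "(\<integral>\<^sup>+l. indicator {0<..} l * ennreal (l ^ k) * F (l *\<^sub>R u) \<partial>lborel)
     = ennreal (1 / norm u ^ (k + 1)) * (\<integral>\<^sup>+r. indicator {0<..} r * ennreal (r ^ k) * F (r *\<^sub>R sgn u) \<partial>lborel)"
proof -
  have nu: "norm u > 0" using u by simp
  have "(\<integral>\<^sup>+l. indicator {0<..} l * ennreal (l ^ k) * F (l *\<^sub>R u) \<partial>lborel)
     = ennreal \<bar>1 / norm u\<bar> * (\<integral>\<^sup>+r. indicator {0<..} (0 + (1 / norm u) * r) * ennreal ((0 + (1 / norm u) * r) ^ k)
          * F ((0 + (1 / norm u) * r) *\<^sub>R u) \<partial>lborel)"
    by (rule nn_integral_real_affine) (use nu in auto)
  also have "\<dots> = ennreal (1 / norm u) * (\<integral>\<^sup>+r. ennreal (1 / norm u ^ k) * (indicator {0<..} r * ennreal (r ^ k) * F (r *\<^sub>R sgn u)) \<partial>lborel)"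
  proof -
    have "indicator {0<..} (0 + (1 / norm u) * r) * ennreal ((0 + (1 / norm u) * r) ^ k) * F ((0 + (1 / norm u) * r) *\<^sub>R u)
        = ennreal (1 / norm u ^ k) * (indicator {0<..} r * ennreal (r ^ k) * F (r *\<^sub>R sgn u))" for r
    proof (cases "r > 0")
      case True
      have "ennreal ((1 / norm u * r) ^ k) = ennreal (1 / norm u ^ k) * ennreal (r ^ k)"
        using True nu by (simp add: ennreal_mult[symmetric] power_mult_distrib power_divide)
      moreover have "(1 / norm u * r) *\<^sub>R u = r *\<^sub>R sgn u" by (simp add: sgn_div_norm divide_inverse)
      ultimately show ?thesis using True nu by (simp add: indicator_def mult_ac)
    next
      case False
      then have "\<not> 0 < r / norm u" using nu by (simp add: zero_less_divide_iff)
      then show ?thesis using nu False by (simp add: indicator_def)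
    qed
    then show ?thesis using nu by simp
  qed
  also have "\<dots> = ennreal (1 / norm u) * ennreal (1 / norm u ^ k)
      * (\<integral>\<^sup>+r. indicator {0<..} r * ennreal (r ^ k) * F (r *\<^sub>R sgn u) \<partial>lborel)"
    by (subst nn_integral_cmult) (auto simp: mult_ac)
  also have "ennreal (1 / norm u) * ennreal (1 / norm u ^ k) = ennreal (1 / norm u ^ (k + 1))"
    using nu by (simp add: ennreal_mult[symmetric])
  finally show ?thesis .
qed

text \<open>For z \<noteq> 0 the weight n |z|^n / l^{n+1} on l > |z| has total mass 1; inserting it and
  integrating in z first turns the integral into one over rescaled unit balls.\<close>

lemma nn_integral_polar_slice:
  fixes F :: "'a::euclidean_space \<Rightarrow> ennreal"
  assumes [measurable]: "F \<in> borel_measurable borel" and l: "0 < l"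
  shows "(\<integral>\<^sup>+z. F z * (if norm z < l then ennreal (real DIM('a) * norm z ^ DIM('a) / l ^ (DIM('a) + 1)) else 0) \<partial>lborel)
       = (\<integral>\<^sup>+u. indicator (ball 0 1) u * ennreal (real DIM('a) * norm u ^ DIM('a)) * ennreal (l ^ (DIM('a) - 1))
            * F (l *\<^sub>R u) \<partial>lborel)"
proof -
  define N where "N = DIM('a)"
  obtain m where m: "N = Suc m" by (metis DIM_positive N_def Suc_pred)
  define w where "w z = (if norm z < l then ennreal (real N * norm z ^ N / l ^ (N + 1)) else 0)" for z :: 'a
  have [measurable]: "(\<lambda>z. F z * w z) \<in> borel_measurable borel" unfolding w_def by measurable
  have "(\<integral>\<^sup>+z. F z * w z \<partial>lborel) = ennreal (l ^ N) * (\<integral>\<^sup>+u. F (l *\<^sub>R u) * w (l *\<^sub>R u) \<partial>lborel)"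
    unfolding N_def by (rule nn_integral_lborel_scale) (use l in auto)
  also have "\<dots> = (\<integral>\<^sup>+u. ennreal (l ^ N) * (F (l *\<^sub>R u) * w (l *\<^sub>R u)) \<partial>lborel)"
    by (rule nn_integral_cmult[symmetric]) measurable
  also have "\<dots> = (\<integral>\<^sup>+u. indicator (ball 0 1) u * ennreal (real N * norm u ^ N) * ennreal (l ^ (N - 1)) * F (l *\<^sub>R u) \<partial>lborel)"
  proof (rule nn_integral_cong)
    fix u :: 'a
    have e: "l ^ N * (real N * (l * norm u) ^ N / l ^ (N + 1)) = real N * norm u ^ N * l ^ (N - 1)"
      using l unfolding m by (simp add: field_simps)
    show "ennreal (l ^ N) * (F (l *\<^sub>R u) * w (l *\<^sub>R u))
        = indicator (ball 0 1) u * ennreal (real N * norm u ^ N) * ennreal (l ^ (N - 1)) * F (l *\<^sub>R u)"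
    proof (cases "norm u < 1")
      case True
      have "ennreal (l ^ N) * (F (l *\<^sub>R u) * w (l *\<^sub>R u))
          = F (l *\<^sub>R u) * (ennreal (l ^ N) * ennreal (real N * (l * norm u) ^ N / l ^ (N + 1)))"
        using l True by (simp add: w_def mult_ac)
      also have "\<dots> = F (l *\<^sub>R u) * ennreal (l ^ N * (real N * (l * norm u) ^ N / l ^ (N + 1)))"
        using l by (subst ennreal_mult) auto
      also have "\<dots> = F (l *\<^sub>R u) * (ennreal (real N * norm u ^ N) * ennreal (l ^ (N - 1)))"
        unfolding e using l by (subst ennreal_mult) auto
      finally show ?thesis using True by (simp add: indicator_def mult_ac)
    qed (use l in \<open>simp add: w_def indicator_def\<close>)
  qed
  finally show ?thesis unfolding w_def N_def .
qed

lemma nn_integral_eq_integral_rescaled_balls: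
  fixes F :: "'a::euclidean_space \<Rightarrow> ennreal"
  assumes [measurable]: "F \<in> borel_measurable borel"
  shows "(\<integral>\<^sup>+z. F z \<partial>lborel)
       = (\<integral>\<^sup>+l. (\<integral>\<^sup>+u. indicator {0<..} l * indicator (ball 0 1) u * ennreal (real DIM('a) * norm u ^ DIM('a))
                     * ennreal (l ^ (DIM('a) - 1)) * F (l *\<^sub>R u) \<partial>lborel) \<partial>lborel)"
proof -
  define N where "N = DIM('a)"
  have N: "N \<ge> 1" by (simp add: N_def Suc_leI)
  define w where "w l z = (if norm z < l then ennreal (real N * norm z ^ N / l ^ (N + 1)) else 0)" for l :: real and z :: 'a
  have [measurable]: "(\<lambda>(z, l). w l z) \<in> borel_measurable (lborel \<Otimes>\<^sub>M lborel)"
    unfolding w_def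
    by (subst measurable_cong_sets[OF sets_pair_measure_cong[OF sets_lborel sets_lborel] refl]) measurable
  have w_integral: "(\<integral>\<^sup>+l. w l z \<partial>lborel) = 1" if "z \<noteq> 0" for z
  proof -
    have "(\<integral>\<^sup>+l. w l z \<partial>lborel) = (\<integral>\<^sup>+l. indicator {norm z<..} l * ennreal (real N * norm z ^ N / l ^ (N + 1)) \<partial>lborel)"
      by (rule nn_integral_cong) (simp add: w_def indicator_def)
    then show ?thesis using nn_integral_power_tail[of "norm z" N] that N by simp
  qed
  have "AE z in lborel. F z = F z * (\<integral>\<^sup>+l. w l z \<partial>lborel)"
    using AE_lborel_singleton[of "0::'a"] by eventually_elim (simp add: w_integral)
  then have "(\<integral>\<^sup>+z. F z \<partial>lborel) = (\<integral>\<^sup>+z. F z * (\<integral>\<^sup>+l. w l z \<partial>lborel) \<partial>lborel)"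
    by (rule nn_integral_cong_AE)
  also have "\<dots> = (\<integral>\<^sup>+z. (\<integral>\<^sup>+l. F z * w l z \<partial>lborel) \<partial>lborel)"
    by (rule nn_integral_cong, rule nn_integral_cmult[symmetric]) (simp add: w_def)
  also have "\<dots> = (\<integral>\<^sup>+l. (\<integral>\<^sup>+z. F z * w l z \<partial>lborel) \<partial>lborel)"
    by (rule lborel_pair.Fubini'[symmetric]) (simp add: w_def case_prod_unfold)
  also have "\<dots> = (\<integral>\<^sup>+l. (\<integral>\<^sup>+u. indicator {0<..} l * indicator (ball 0 1) u * ennreal (real N * norm u ^ N)
                        * ennreal (l ^ (N - 1)) * F (l *\<^sub>R u) \<partial>lborel) \<partial>lborel)"
  proof (rule nn_integral_cong)
    fix l :: real
    show "(\<integral>\<^sup>+z. F z * w l z \<partial>lborel) = (\<integral>\<^sup>+u. indicator {0<..} l * indicator (ball 0 1) u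
            * ennreal (real N * norm u ^ N) * ennreal (l ^ (N - 1)) * F (l *\<^sub>R u) \<partial>lborel)"
    proof (cases "l > 0")
      case True
      then show ?thesis unfolding w_def N_def using nn_integral_polar_slice[OF _ True, of F] by simp
    next
      case False
      have "w l z = 0" for z
        unfolding w_def using False norm_ge_zero[of z] by (simp del: norm_ge_zero)
      then show ?thesis using False by (simp add: indicator_def)
    qed
  qed
  finally show ?thesis unfolding N_def .
qed

lemma nn_integral_polar:
  fixes F :: "'a::euclidean_space \<Rightarrow> ennreal"
  assumes [measurable]: "F \<in> borel_measurable borel"
  shows "(\<integral>\<^sup>+z. F z \<partial>lborel) = ennreal (real DIM('a)) *
     (\<integral>\<^sup>+u. indicator (ball 0 1) u * (\<integral>\<^sup>+r. indicator {0<..} r * ennreal (r ^ (DIM('a) - 1)) * F (r *\<^sub>R sgn u) \<partial>lborel) \<partial>lborel)"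
proof -
  define N where "N = DIM('a)"
  have N: "N \<ge> 1" by (simp add: N_def Suc_leI)
  have "(\<integral>\<^sup>+z. F z \<partial>lborel)
      = (\<integral>\<^sup>+l. (\<integral>\<^sup>+u. indicator {0<..} l * indicator (ball 0 1) u * ennreal (real N * norm u ^ N)
                    * ennreal (l ^ (N - 1)) * F (l *\<^sub>R u) \<partial>lborel) \<partial>lborel)"
    unfolding N_def by (rule nn_integral_eq_integral_rescaled_balls) measurable
  also have "\<dots> = (\<integral>\<^sup>+u. (\<integral>\<^sup>+l. indicator {0<..} l * indicator (ball 0 1) u * ennreal (real N * norm u ^ N)
                        * ennreal (l ^ (N - 1)) * F (l *\<^sub>R u) \<partial>lborel) \<partial>lborel)"
    by (rule lborel_pair.Fubini',
        subst measurable_cong_sets[OF sets_pair_measure_cong[OF sets_lborel sets_lborel] refl]) measurable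
  also have "\<dots> = (\<integral>\<^sup>+u. indicator (ball 0 1) u * ennreal (real N * norm u ^ N)
                   * (\<integral>\<^sup>+l. indicator {0<..} l * ennreal (l ^ (N - 1)) * F (l *\<^sub>R u) \<partial>lborel) \<partial>lborel)"
    by (intro nn_integral_cong, subst nn_integral_cmult[symmetric], measurable)
       (rule nn_integral_cong, simp add: mult_ac)
  also have "\<dots> = (\<integral>\<^sup>+u. ennreal (real N) * (indicator (ball 0 1) u
                   * (\<integral>\<^sup>+r. indicator {0<..} r * ennreal (r ^ (N - 1)) * F (r *\<^sub>R sgn u) \<partial>lborel)) \<partial>lborel)"
    using AE_lborel_singleton[of "0::'a"]
  proof (intro nn_integral_cong_AE, eventually_elim)
    case (elim u)
    have "(\<integral>\<^sup>+l. indicator {0<..} l * ennreal (l ^ (N - 1)) * F (l *\<^sub>R u) \<partial>lborel)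
        = ennreal (1 / norm u ^ N) * (\<integral>\<^sup>+r. indicator {0<..} r * ennreal (r ^ (N - 1)) * F (r *\<^sub>R sgn u) \<partial>lborel)"
      using nn_integral_ray_rescale[of F u "N - 1", OF assms] elim N by simp
    moreover have "ennreal (real N * norm u ^ N) * ennreal (1 / norm u ^ N) = ennreal (real N)"
      using elim by (simp add: ennreal_mult[symmetric])
    ultimately show ?case by (metis (no_types, lifting) mult.assoc mult.left_commute)
  qed
  also have "\<dots> = ennreal (real N) * (\<integral>\<^sup>+u. indicator (ball 0 1) u
                   * (\<integral>\<^sup>+r. indicator {0<..} r * ennreal (r ^ (N - 1)) * F (r *\<^sub>R sgn u) \<partial>lborel) \<partial>lborel)"
  proof (rule nn_integral_cmult)
    have [measurable]: "(\<lambda>x. \<integral>\<^sup>+ r. indicator {0<..} r * ennreal (r ^ (N - 1)) * F (r *\<^sub>R sgn x) \<partial>lborel) \<in> borel_measurable borel"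
      by (rule lborel.borel_measurable_nn_integral,
          subst measurable_cong_sets[OF sets_pair_measure_cong[OF refl sets_lborel] refl]) measurable
    show "(\<lambda>x. indicator (ball 0 1) x * \<integral>\<^sup>+ r. indicator {0<..} r * ennreal (r ^ (N - 1)) * F (r *\<^sub>R sgn x) \<partial>lborel) \<in> borel_measurable lborel"
      by measurable
  qed
  finally show ?thesis unfolding N_def .
qed

lemma nn_integral_power_Ioo:
  fixes R :: real and N :: nat
  assumes R: "0 \<le> R" and N: "1 \<le> N"
  shows "(\<integral>\<^sup>+r. indicator {0<..} r * ennreal (r ^ (N - 1)) * indicator {..<R} r \<partial>lborel) = ennreal (R ^ N / real N)"
proof -
  have "(\<integral>\<^sup>+r. ennreal (r ^ (N - 1)) * indicator {0..R} r \<partial>lborel) = ennreal (R ^ N / real N - 0 ^ N / real N)"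
  proof (rule nn_integral_FTC_Icc)
    fix x :: real assume x: "x \<in> {0..R}"
    show "((\<lambda>r. r ^ N / real N) has_real_derivative x ^ (N - 1)) (at x)"
      using N by (auto intro!: derivative_eq_intros)
    show "0 \<le> x ^ (N - 1)" using x by simp
  qed (use R in auto)
  also have "\<dots> = ennreal (R ^ N / real N)" using N by (simp add: zero_power)
  finally have Icc: "(\<integral>\<^sup>+r. ennreal (r ^ (N - 1)) * indicator {0..R} r \<partial>lborel) = ennreal (R ^ N / real N)" .
  have "AE r in lborel. indicator {0<..} r * ennreal (r ^ (N - 1)) * indicator {..<R} r
      = ennreal (r ^ (N - 1)) * indicator {0..R} r"
    using AE_lborel_singleton[of "0::real"] AE_lborel_singleton[of R]
    by eventually_elim (auto simp: indicator_def)
  then show ?thesis unfolding Icc[symmetric] by (rule nn_integral_cong_AE)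
qed

definition star_domain :: "'a::real_normed_vector \<Rightarrow> ('a \<Rightarrow> real) \<Rightarrow> 'a set" where
  "star_domain c \<rho> = {y. y \<noteq> c \<and> norm (y - c) < \<rho> (sgn (y - c))}"

lemma star_domain_in_borel[measurable]:
  fixes c :: "'a::euclidean_space"
  assumes [measurable]: "\<rho> \<in> borel_measurable borel"
  shows "star_domain c \<rho> \<in> sets borel"
  unfolding star_domain_def by measurable

lemma add_scaleR_sgn_in_star_domain_iff:
  fixes c u :: "'a::real_normed_vector"
  assumes "u \<noteq> 0" "0 < r"
  shows "c + r *\<^sub>R sgn u \<in> star_domain c \<rho> \<longleftrightarrow> r < \<rho> (sgn u)"
proof -
  have "sgn (sgn u) = sgn u"
    by (simp only: sgn_div_norm[of "sgn u"]) (simp add: norm_sgn assms)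
  then have "sgn (r *\<^sub>R sgn u) = sgn u" using assms by (simp add: sgn_scaleR)
  moreover have "norm (r *\<^sub>R sgn u) = r" using assms by (simp add: norm_sgn)
  moreover have "r *\<^sub>R sgn u \<noteq> 0" using assms by (simp add: sgn_zero_iff)
  ultimately show ?thesis by (simp add: star_domain_def)
qed

lemma nn_integral_ray_star_domain:
  fixes c u :: "'a::euclidean_space"
  assumes u: "u \<noteq> 0" and \<rho>: "0 \<le> \<rho> (sgn u)"
  shows "(\<integral>\<^sup>+r. indicator {0<..} r * ennreal (r ^ (DIM('a) - 1)) * indicator (star_domain c \<rho>) (c + r *\<^sub>R sgn u) \<partial>lborel)
       = ennreal (\<rho> (sgn u) ^ DIM('a) / real DIM('a))"
proof -
  have "(\<integral>\<^sup>+r. indicator {0<..} r * ennreal (r ^ (DIM('a) - 1)) * indicator (star_domain c \<rho>) (c + r *\<^sub>R sgn u) \<partial>lborel)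
      = (\<integral>\<^sup>+r. indicator {0<..} r * ennreal (r ^ (DIM('a) - 1)) * indicator {..<\<rho> (sgn u)} r \<partial>lborel)"
    using add_scaleR_sgn_in_star_domain_iff[OF u] by (intro nn_integral_cong) (auto simp: indicator_def)
  also have "\<dots> = ennreal (\<rho> (sgn u) ^ DIM('a) / real DIM('a))"
    using \<rho> by (intro nn_integral_power_Ioo) (auto simp: Suc_leI)
  finally show ?thesis .
qed

lemma emeasure_star_domain:
  fixes \<rho> :: "'a::euclidean_space \<Rightarrow> real" and c :: 'a
  assumes [measurable]: "\<rho> \<in> borel_measurable borel" and \<rho>: "\<And>\<omega>. 0 \<le> \<rho> \<omega>"
  shows "emeasure lborel (star_domain c \<rho>) = (\<integral>\<^sup>+u. indicator (ball 0 1) u * ennreal (\<rho> (sgn u) ^ DIM('a)) \<partial>lborel)"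
proof -
  define N where "N = DIM('a)"
  have N: "N \<ge> 1" by (simp add: N_def Suc_leI)
  define S where "S = star_domain c \<rho>"
  have [measurable]: "S \<in> sets borel" unfolding S_def by measurable
  have "emeasure lborel S = (\<integral>\<^sup>+z. indicator S (c + z) \<partial>lborel)"
    by (simp add: nn_integral_lborel_translate[symmetric])
  also have "\<dots> = ennreal (real N) * (\<integral>\<^sup>+u. indicator (ball 0 1) u
      * (\<integral>\<^sup>+r. indicator {0<..} r * ennreal (r ^ (N - 1)) * indicator S (c + r *\<^sub>R sgn u) \<partial>lborel) \<partial>lborel)"
    unfolding N_def by (rule nn_integral_polar) measurable
  also have "\<dots> = ennreal (real N) * (\<integral>\<^sup>+u. indicator (ball 0 1) u * ennreal (\<rho> (sgn u) ^ N / real N) \<partial>lborel)"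
  proof -
    have "AE u in lborel. indicator (ball 0 1) u
          * (\<integral>\<^sup>+r. indicator {0<..} r * ennreal (r ^ (N - 1)) * indicator S (c + r *\<^sub>R sgn u) \<partial>lborel)
        = indicator (ball 0 1) u * ennreal (\<rho> (sgn u) ^ N / real N)"
      using AE_lborel_singleton[of "0::'a"]
    proof eventually_elim
      case (elim u)
      show ?case using nn_integral_ray_star_domain[OF elim \<rho>, of c] by (simp add: S_def N_def)
    qed
    then show ?thesis by (simp add: nn_integral_cong_AE)
  qed
  also have "\<dots> = (\<integral>\<^sup>+u. ennreal (real N) * (indicator (ball 0 1) u * ennreal (\<rho> (sgn u) ^ N / real N)) \<partial>lborel)"
    by (rule nn_integral_cmult[symmetric]) measurable
  also have "\<dots> = (\<integral>\<^sup>+u. indicator (ball 0 1) u * ennreal (\<rho> (sgn u) ^ N) \<partial>lborel)"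
  proof (rule nn_integral_cong)
    fix u :: 'a
    have "ennreal (real N) * ennreal (\<rho> (sgn u) ^ N / real N) = ennreal (\<rho> (sgn u) ^ N)"
      using N \<rho>[of "sgn u"] by (simp add: ennreal_mult[symmetric])
    then show "ennreal (real N) * (indicator (ball 0 1) u * ennreal (\<rho> (sgn u) ^ N / real N))
        = indicator (ball 0 1) u * ennreal (\<rho> (sgn u) ^ N)"
      by (simp add: mult_ac indicator_def)
  qed
  finally show ?thesis unfolding S_def N_def .
qed

lemma powr_inverse_power:
  fixes X q :: real
  assumes "0 \<le> X" "0 < q" "1 \<le> N"
  shows "(X powr (1 / q)) ^ N = X powr (real N / q)"
proof (cases "X = 0")
  case False
  then have "(X powr (1 / q)) ^ N = (X powr (1 / q)) powr real N" using assms by (simp add: powr_realpow)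
  also have "\<dots> = X powr (real N / q)" by (simp add: powr_powr)
  finally show ?thesis .
qed (use assms in \<open>simp add: zero_power\<close>)

lemma emeasure_star_domain_powr:
  fixes c :: "'a::euclidean_space" and h :: "'a \<Rightarrow> real"
  assumes [measurable]: "h \<in> borel_measurable borel"
    and h: "\<And>\<omega>. 0 \<le> h \<omega>" and q: "0 < q" and s: "0 < s"
  shows "emeasure lborel (star_domain c (\<lambda>\<omega>. (h \<omega> / s) powr (1 / q)))
       = ennreal (s powr (- (real DIM('a) / q)))
         * (\<integral>\<^sup>+u. indicator (ball 0 1) u * ennreal (h (sgn u) powr (real DIM('a) / q)) \<partial>lborel)"
proof -
  have "emeasure lborel (star_domain c (\<lambda>\<omega>. (h \<omega> / s) powr (1 / q)))
      = (\<integral>\<^sup>+u. indicator (ball 0 1) u * ennreal (((h (sgn u) / s) powr (1 / q)) ^ DIM('a)) \<partial>lborel)"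
    by (rule emeasure_star_domain) auto
  also have "\<dots> = (\<integral>\<^sup>+u. ennreal (s powr (- (real DIM('a) / q)))
      * (indicator (ball 0 1) u * ennreal (h (sgn u) powr (real DIM('a) / q))) \<partial>lborel)"
  proof (rule nn_integral_cong)
    fix u :: 'a
    have "((h (sgn u) / s) powr (1 / q)) ^ DIM('a) = (h (sgn u) / s) powr (real DIM('a) / q)"
      using h q s by (intro powr_inverse_power) (auto simp: Suc_leI)
    also have "\<dots> = s powr (- (real DIM('a) / q)) * h (sgn u) powr (real DIM('a) / q)"
      using h s by (simp add: powr_divide powr_minus_divide)
    finally show "indicator (ball 0 1) u * ennreal (((h (sgn u) / s) powr (1 / q)) ^ DIM('a))
        = ennreal (s powr (- (real DIM('a) / q))) * (indicator (ball 0 1) u * ennreal (h (sgn u) powr (real DIM('a) / q)))"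
      by (simp add: ennreal_mult indicator_def)
  qed
  also have "\<dots> = ennreal (s powr (- (real DIM('a) / q)))
      * (\<integral>\<^sup>+u. indicator (ball 0 1) u * ennreal (h (sgn u) powr (real DIM('a) / q)) \<partial>lborel)"
    by (rule nn_integral_cmult) measurable
  finally show ?thesis .
qed

lemma emeasure_lebesgue_le_insert:
  fixes S :: "'a::euclidean_space set"
  assumes "T \<subseteq> insert c S" and S: "S \<in> sets borel"
  shows "emeasure lebesgue T \<le> emeasure lborel S"
proof -
  have cS: "S \<union> {c} \<in> sets borel" using S by simp
  then have "emeasure lebesgue T \<le> emeasure lebesgue (S \<union> {c})"
    using assms(1) by (intro emeasure_mono) auto
  also have "\<dots> = emeasure lborel (S \<union> {c})" using cS by simp
  also have "\<dots> \<le> emeasure lborel S + emeasure lborel {c}"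
    by (rule emeasure_subadditive) (auto simp: S)
  finally show ?thesis by simp
qed

lemma emeasure_lborel_ball_eq_measure:
  "emeasure lborel (ball (c::'a::euclidean_space) r) = ennreal (measure lborel (ball c r))"
  using emeasure_lborel_ball_finite[of c r] by (intro emeasure_eq_ennreal_measure) simp

lemma nn_integral_indicator_add_const:
  fixes f :: "'a::euclidean_space \<Rightarrow> real"
  assumes [measurable]: "f \<in> borel_measurable borel" "S \<in> sets borel"
    and f: "\<And>u. 0 \<le> f u" and a: "0 \<le> a"
  shows "(\<integral>\<^sup>+u. indicator S u * ennreal (f u + a) \<partial>lborel)
       = (\<integral>\<^sup>+u. indicator S u * ennreal (f u) \<partial>lborel) + ennreal a * emeasure lborel S"
proof -
  have "(\<integral>\<^sup>+u. indicator S u * ennreal (f u + a) \<partial>lborel)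
      = (\<integral>\<^sup>+u. indicator S u * ennreal (f u) + ennreal a * indicator S u \<partial>lborel)"
    using f a by (intro nn_integral_cong) (simp add: distrib_left mult_ac)
  also have "\<dots> = (\<integral>\<^sup>+u. indicator S u * ennreal (f u) \<partial>lborel) + (\<integral>\<^sup>+u. ennreal a * indicator S u \<partial>lborel)"
    by (rule nn_integral_add) auto
  finally show ?thesis by (simp add: nn_integral_cmult)
qed

lemma nn_integral_sphere_measure:
  fixes h :: "'a::euclidean_space \<Rightarrow> ennreal"
  assumes [measurable]: "h \<in> borel_measurable borel"
  shows "(\<integral>\<^sup>+\<omega>. h \<omega> \<partial>(sphere_measure :: 'a measure))
       = ennreal (real DIM('a)) * (\<integral>\<^sup>+u. indicator (ball 0 1) u * h (sgn u) \<partial>lborel)"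
proof -
  have normalize: "(\<lambda>x::'a. x /\<^sub>R norm x)
      \<in> restrict_space lborel (ball 0 1 - {0}) \<rightarrow>\<^sub>M restrict_space borel (sphere 0 1)"
    by (rule measurable_restrict_space2) (auto intro: measurable_restrict_space1)
  have h_sphere: "h \<in> borel_measurable (restrict_space borel (sphere 0 1))"
    by (rule measurable_restrict_space1) simp
  have "(\<integral>\<^sup>+\<omega>. h \<omega> \<partial>(sphere_measure :: 'a measure))
      = of_nat DIM('a) * (\<integral>\<^sup>+\<omega>. h \<omega> \<partial>distr (restrict_space lborel (ball 0 1 - {0}))
                                          (restrict_space borel (sphere 0 1)) (\<lambda>x::'a. x /\<^sub>R norm x))"
    unfolding sphere_measure_def by (rule nn_integral_scale_measure) (simp add: h_sphere)
  also have "(\<integral>\<^sup>+\<omega>. h \<omega> \<partial>distr (restrict_space lborel (ball 0 1 - {0}))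
                         (restrict_space borel (sphere 0 1)) (\<lambda>x::'a. x /\<^sub>R norm x))
      = (\<integral>\<^sup>+x. h (x /\<^sub>R norm x) * indicator (ball 0 1 - {0}) x \<partial>lborel)"
    by (simp add: nn_integral_distr[OF normalize] h_sphere nn_integral_restrict_space)
  also have "\<dots> = (\<integral>\<^sup>+u. indicator (ball 0 1) u * h (sgn u) \<partial>lborel)"
  proof (rule nn_integral_cong_AE)
    show "AE x in lborel. h (x /\<^sub>R norm x) * indicator (ball 0 1 - {0}) x = indicator (ball 0 1) x * h (sgn x)"
      using AE_lborel_singleton[of "0::'a"] by eventually_elim (simp add: sgn_div_norm indicator_def)
  qed
  finally show ?thesis by (simp add: ennreal_of_nat_eq_real_of_nat)
qed

section \<open>Elementary estimates\<close>

lemma powr_add_le_Lipschitz: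
  fixes a B \<delta> P :: real
  assumes a: "0 \<le> a" "a \<le> B" and \<delta>: "0 \<le> \<delta>" "\<delta> \<le> 1" and P: "1 \<le> P"
  shows "(a + \<delta>) powr P \<le> a powr P + P * (B + 1) powr (P - 1) * \<delta>"
proof (cases "\<delta> = 0")
  case False
  then have \<delta>_pos: "0 < \<delta>" using \<delta> by simp
  have derivative: "((\<lambda>t. t powr P) has_real_derivative P * t powr (P - 1)) (at t)" if "0 < t" for t
    using that by (auto intro!: derivative_eq_intros simp: powr_diff)
  have "continuous_on {a..a + \<delta>} (\<lambda>t. t powr P)"
    using P a by (intro continuous_on_powr' continuous_intros) auto
  moreover have "(\<lambda>t. t powr P) differentiable (at t)" if "a < t" "t < a + \<delta>" for t
    using derivative[of t] that a by (auto simp: real_differentiable_def)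
  ultimately obtain l z where z: "a < z" "z < a + \<delta>" and D: "DERIV (\<lambda>t. t powr P) z :> l"
    and mvt: "(a + \<delta>) powr P - a powr P = (a + \<delta> - a) * l"
    using MVT[of a "a + \<delta>" "\<lambda>t. t powr P"] \<delta>_pos by auto
  have "l = P * z powr (P - 1)"
    using z a derivative[of z] D DERIV_unique by auto
  moreover have "z powr (P - 1) \<le> (B + 1) powr (P - 1)"
    using z a \<delta> P by (intro powr_mono2) auto
  ultimately have "\<delta> * l \<le> \<delta> * (P * (B + 1) powr (P - 1))"
    using \<delta>_pos P by (intro mult_left_mono) auto
  then show ?thesis using mvt by (simp add: mult_ac)
qed simp

lemma powr_le_truncated_add_Lipschitz:
  fixes a B \<delta> P :: real
  assumes a: "0 \<le> a" "a \<le> B" and \<delta>: "0 \<le> \<delta>" "\<delta> \<le> 1" and P: "1 \<le> P"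
  shows "a powr P \<le> max (a - \<delta>) 0 powr P + P * (B + 1) powr (P - 1) * \<delta>"
proof -
  have "a powr P \<le> (max (a - \<delta>) 0 + \<delta>) powr P" using a P by (intro powr_mono2) auto
  also have "\<dots> \<le> max (a - \<delta>) 0 powr P + P * (B + 1) powr (P - 1) * \<delta>"
    using a \<delta> P by (intro powr_add_le_Lipschitz) auto
  finally show ?thesis .
qed

lemma less_root_level_iff:
  fixes r q s X :: real
  assumes r: "0 < r" and q: "0 < q" and s: "0 < s" and X: "0 \<le> X"
  shows "r < (X / s) powr (1 / q) \<longleftrightarrow> s < r powr (- q) * X"
proof -
  have "r < (X / s) powr (1 / q) \<longleftrightarrow> r powr q < X / s"
  proof
    assume "r < (X / s) powr (1 / q)"
    then have "r powr q < ((X / s) powr (1 / q)) powr q" using r q by (intro powr_less_mono2) auto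
    then show "r powr q < X / s" using q s X by (simp add: powr_powr)
  next
    assume "r powr q < X / s"
    then have "(r powr q) powr (1 / q) < (X / s) powr (1 / q)" using r q by (intro powr_less_mono2) auto
    then show "r < (X / s) powr (1 / q)" using r q by (simp add: powr_powr)
  qed
  also have "\<dots> \<longleftrightarrow> s < r powr (- q) * X"
    using r s by (simp add: powr_minus field_simps)
  finally show ?thesis .
qed

lemma powr_minus_add_split:
  fixes r q \<epsilon> G C :: real
  shows "G * r powr (- q) + C * r powr (- q + \<epsilon>) = r powr (- q) * (G + C * r powr \<epsilon>)"
  unfolding powr_add[of r "- q" \<epsilon>] by (simp add: algebra_simps)

lemma radius_lt_of_level_lt:
  fixes q \<epsilon> r D B C s :: real
  assumes q: "0 < q" and \<epsilon>: "0 < \<epsilon>" and r: "0 < r" "r \<le> D" and B: "0 \<le> B" and C: "0 \<le> C"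
    and s: "0 < s" and level: "s < B * r powr (- q) + C * r powr (- q + \<epsilon>)"
  shows "r < ((B + C * D powr \<epsilon>) / s) powr (1 / q)"
proof -
  have "r powr (- q) * (B + C * r powr \<epsilon>) \<le> r powr (- q) * (B + C * D powr \<epsilon>)"
    using r \<epsilon> C by (intro mult_left_mono add_left_mono powr_mono2) auto
  then have "s < r powr (- q) * (B + C * D powr \<epsilon>)"
    using level powr_minus_add_split[of B r q C \<epsilon>] by linarith
  then show ?thesis using less_root_level_iff[OF r(1) q s] B C by simp
qed

text \<open>For s large the correction C r^{\<epsilon>} is at most C s^{-\<epsilon>/(2q)} on the superlevel set: where
  r \<ge> s^{-1/(2q)}, the kernel bound B r^{-q} + C r^{-q+\<epsilon>} is at most s^{1/2} s^{1/2} = s.\<close>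

lemma radius_lt_of_level_lt_sharp:
  fixes q \<epsilon> r D G B C s :: real
  assumes q: "0 < q" and \<epsilon>: "0 < \<epsilon>" and r: "0 < r" "r \<le> D" and G: "0 \<le> G" "G \<le> B" and C: "0 \<le> C"
    and s: "1 \<le> s" and large: "B + C * D powr \<epsilon> \<le> s powr (1 / 2)"
    and level: "s < G * r powr (- q) + C * r powr (- q + \<epsilon>)"
  shows "r < ((G + C * s powr (- (\<epsilon> / (2 * q)))) / s) powr (1 / q)"
proof -
  have small: "r < s powr (- (1 / (2 * q)))"
  proof (rule ccontr)
    assume "\<not> r < s powr (- (1 / (2 * q)))"
    then have "r powr (- q) \<le> (s powr (- (1 / (2 * q)))) powr (- q)"
      using q s by (intro powr_mono2') auto
    also have "\<dots> = s powr (1 / 2)" using s q by (simp add: powr_powr)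
    finally have "r powr (- q) \<le> s powr (1 / 2)" .
    moreover have "G + C * r powr \<epsilon> \<le> s powr (1 / 2)"
      using large r \<epsilon> G C powr_mono2[of \<epsilon> r D] mult_left_mono[of "r powr \<epsilon>" "D powr \<epsilon>" C] by linarith
    ultimately have "r powr (- q) * (G + C * r powr \<epsilon>) \<le> s powr (1 / 2) * s powr (1 / 2)"
      using G C by (intro mult_mono) auto
    also have "\<dots> = s" using s by (simp add: powr_add[symmetric])
    finally show False using level powr_minus_add_split[of G r q C \<epsilon>] by linarith
  qed
  have "r powr \<epsilon> \<le> (s powr (- (1 / (2 * q)))) powr \<epsilon>"
    using small r \<epsilon> by (intro powr_mono2) auto
  also have "\<dots> = s powr (- (\<epsilon> / (2 * q)))" using s by (simp add: powr_powr)
  finally have "r powr (- q) * (G + C * r powr \<epsilon>) \<le> r powr (- q) * (G + C * s powr (- (\<epsilon> / (2 * q))))"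
    using C by (intro mult_left_mono add_left_mono) auto
  then have "s < r powr (- q) * (G + C * s powr (- (\<epsilon> / (2 * q))))"
    using level powr_minus_add_split[of G r q C \<epsilon>] by linarith
  then show ?thesis using less_root_level_iff[OF r(1) q] G C s by simp
qed

lemma level_lt_of_radius_lt:
  fixes q \<epsilon> r G B C s :: real
  assumes q: "0 < q" and \<epsilon>: "0 < \<epsilon>" and r: "0 < r" and G: "0 \<le> G" "G \<le> B" and C: "0 \<le> C"
    and s: "1 \<le> s" and large: "B \<le> s powr (1 / 2)"
    and radius: "r < (max (G - C * s powr (- (\<epsilon> / (2 * q)))) 0 / s) powr (1 / q)"
  shows "r < s powr (- (1 / (2 * q)))" and "s < G * r powr (- q) - C * r powr (- q + \<epsilon>)"
proof -
  define m where "m = max (G - C * s powr (- (\<epsilon> / (2 * q)))) 0"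
  have "0 \<le> C * s powr (- (\<epsilon> / (2 * q)))" using C by simp
  then have m: "0 \<le> m" "m \<le> B" using G by (auto simp: m_def)
  have level: "s < r powr (- q) * m"
    using radius less_root_level_iff[OF r q _ m(1)] s unfolding m_def by simp
  then have "0 < m" using s r by (smt (verit) mult_nonneg_nonpos powr_ge_zero)
  then have m_eq: "m = G - C * s powr (- (\<epsilon> / (2 * q)))" by (simp add: m_def max_def split: if_splits)
  have half: "s powr (1 / 2) / s = s powr (- (1 / 2))"
    using s by (simp add: powr_minus_divide powr_add[symmetric] field_simps powr_diff)
  have "(m / s) powr (1 / q) \<le> (s powr (1 / 2) / s) powr (1 / q)"
    using m large s q by (intro powr_mono2 divide_right_mono) auto
  also have "\<dots> = s powr (- (1 / (2 * q)))"
    using s unfolding half by (simp add: powr_powr)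
  finally show small: "r < s powr (- (1 / (2 * q)))" using radius unfolding m_def by linarith
  have "r powr \<epsilon> \<le> (s powr (- (1 / (2 * q)))) powr \<epsilon>"
    using small r \<epsilon> by (intro powr_mono2) auto
  also have "\<dots> = s powr (- (\<epsilon> / (2 * q)))" using s by (simp add: powr_powr)
  finally have "r powr (- q) * m \<le> r powr (- q) * (G - C * r powr \<epsilon>)"
    using C m_eq by (intro mult_left_mono) (auto intro: mult_left_mono)
  also have "\<dots> = G * r powr (- q) - C * r powr (- q + \<epsilon>)"
    unfolding powr_add[of r "- q" \<epsilon>] by (simp add: algebra_simps)
  finally show "s < G * r powr (- q) - C * r powr (- q + \<epsilon>)" using level by linarith
qed

lemma conjugate_exponent_eq:
  fixes n d p p' :: real
  assumes "0 < d" "d < n" "p = n / d" "1 / p + 1 / p' = 1"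
  shows "p' = n / (n - d)"
proof -
  have "d / n + 1 / p' = 1" using assms(3,4) by simp
  then have "1 / p' = (n - d) / n" using assms(1,2) by (simp add: field_simps)
  then show ?thesis using assms(2) by (simp add: divide_simps mult.commute split: if_splits)
qed

lemma bounds_for_all_pos_of_eventually:
  fixes F G :: "real \<Rightarrow> ennreal" and P :: bool
  assumes p: "0 \<le> p" and \<sigma>: "0 < \<sigma>" and W: "0 \<le> W" and Gmax: "0 \<le> Gmax" and c: "0 \<le> c"
    and F_le: "\<And>s. F s \<le> ennreal W"
    and G_le: "\<And>s. 0 < s \<Longrightarrow> G s \<le> ennreal (Gmax * s powr (- p))"
    and ev: "eventually (\<lambda>s. F s \<le> G s + ennreal (c * s powr (- p - \<sigma>))
                           \<and> (P \<longrightarrow> G s \<le> F s + ennreal (c * s powr (- p - \<sigma>)))) at_top"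
  shows "\<exists>C'. \<forall>s>0. F s \<le> G s + ennreal (C' * s powr (- p - \<sigma>))
                     \<and> (P \<longrightarrow> G s \<le> F s + ennreal (C' * s powr (- p - \<sigma>)))"
proof -
  obtain s0 where s0: "\<And>s. s0 \<le> s \<Longrightarrow> F s \<le> G s + ennreal (c * s powr (- p - \<sigma>))
                                     \<and> (P \<longrightarrow> G s \<le> F s + ennreal (c * s powr (- p - \<sigma>)))"
    using ev unfolding eventually_at_top_linorder by blast
  define s1 where "s1 = max s0 1"
  define C' where "C' = c + W * s1 powr (p + \<sigma>) + Gmax * s1 powr \<sigma>"
  have bound: "F s \<le> G s + ennreal (C' * s powr (- p - \<sigma>))
               \<and> (P \<longrightarrow> G s \<le> F s + ennreal (C' * s powr (- p - \<sigma>)))" if s: "0 < s" for s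
  proof (cases "s1 \<le> s")
    case True
    have "ennreal (c * s powr (- p - \<sigma>)) \<le> ennreal (C' * s powr (- p - \<sigma>))"
      using W Gmax by (intro ennreal_leI mult_right_mono) (auto simp: C'_def)
    then show ?thesis
      using s0[of s] True by (auto simp: s1_def intro: order_trans add_left_mono)
  next
    case False
    have "W = W * (s powr (p + \<sigma>) * s powr (- p - \<sigma>))" using s by (simp add: powr_add[symmetric])
    also have "\<dots> \<le> W * (s1 powr (p + \<sigma>) * s powr (- p - \<sigma>))"
      using False s p \<sigma> W by (intro mult_left_mono mult_right_mono powr_mono2) auto
    also have "\<dots> \<le> C' * s powr (- p - \<sigma>)"
      using c Gmax by (subst mult.assoc[symmetric], intro mult_right_mono) (auto simp: C'_def)
    finally have W_le: "ennreal W \<le> ennreal (C' * s powr (- p - \<sigma>))" by (rule ennreal_leI)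
    have "Gmax * s powr (- p) = Gmax * (s powr \<sigma> * s powr (- p - \<sigma>))" by (simp add: powr_add[symmetric])
    also have "\<dots> \<le> Gmax * (s1 powr \<sigma> * s powr (- p - \<sigma>))"
      using False s \<sigma> Gmax by (intro mult_left_mono mult_right_mono powr_mono2) auto
    also have "\<dots> \<le> C' * s powr (- p - \<sigma>)"
      using c W by (subst mult.assoc[symmetric], intro mult_right_mono) (auto simp: C'_def)
    finally have "ennreal (Gmax * s powr (- p)) \<le> ennreal (C' * s powr (- p - \<sigma>))" by (rule ennreal_leI)
    then show ?thesis
      using F_le[of s] G_le[OF s] W_le by (auto intro: order_trans add_increasing)
  qed
  then show ?thesis by blast
qed

section \<open>Kernels with a homogeneous leading term\<close>

lemma measurable_restrict_space_slice:
  fixes f :: "'a::euclidean_space \<Rightarrow> 'b::euclidean_space \<Rightarrow> 'c::topological_space"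
  assumes f: "(\<lambda>z. f (fst z) (snd z)) \<in> borel_measurable (restrict_space borel (X \<times> Y))" and x: "x \<in> X"
  shows "f x \<in> borel_measurable (restrict_space borel Y)"
proof -
  have "(\<lambda>y. (x, y)) \<in> restrict_space borel Y \<rightarrow>\<^sub>M restrict_space borel (X \<times> Y)"
    by (rule measurable_restrict_space2)
       (auto simp: x space_restrict_space intro!: measurable_restrict_space1 borel_measurable_continuous_onI continuous_intros)
  from measurable_comp[OF this f] show ?thesis by (simp add: comp_def)
qed

locale singular_kernel =
  fixes \<Omega> :: "'a::euclidean_space set" and K :: "'a \<Rightarrow> 'a \<Rightarrow> ereal" and g :: "'a \<Rightarrow> 'a \<Rightarrow> real"
    and q \<epsilon> B C D p' :: real
  assumes open_domain: "open \<Omega>"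
    and diameter_le: "\<And>x y. x \<in> \<Omega> \<Longrightarrow> y \<in> \<Omega> \<Longrightarrow> norm (y - x) \<le> D"
    and q_pos: "0 < q" and q_le_DIM: "q \<le> real DIM('a)"
    and p'_eq: "p' = real DIM('a) / q"
    and \<epsilon>_pos: "0 < \<epsilon>" and B_nonneg: "0 \<le> B" and C_nonneg: "0 \<le> C"
    and g_bounded: "\<And>x \<omega>. x \<in> \<Omega> \<Longrightarrow> \<omega> \<in> sphere 0 1 \<Longrightarrow> \<bar>g x \<omega>\<bar> \<le> B"
    and g_measurable: "\<And>x. x \<in> \<Omega> \<Longrightarrow> g x \<in> borel_measurable (restrict_space borel (sphere 0 1))"
    and K_measurable: "\<And>x. x \<in> \<Omega> \<Longrightarrow> K x \<in> borel_measurable (restrict_space borel \<Omega>)"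
    and K_expansion: "\<And>x y. x \<in> \<Omega> \<Longrightarrow> y \<in> \<Omega> \<Longrightarrow> x \<noteq> y \<Longrightarrow>
      \<exists>r. K x y = ereal (g x (sgn (y - x)) * norm (y - x) powr (- q) + r)
          \<and> \<bar>r\<bar> \<le> C * norm (y - x) powr (- q + \<epsilon>)"
begin

lemma one_le_p': "1 \<le> p'"
  using q_pos q_le_DIM by (simp add: p'_eq field_simps)

lemma emeasure_domain_eq: "emeasure lborel \<Omega> = ennreal (measure lborel \<Omega>)"
proof -
  have "bounded \<Omega>"
    unfolding bounded_two_points using diameter_le by (metis dist_norm)
  then have "emeasure lborel \<Omega> < \<infinity>" by (rule emeasure_bounded_finite)
  then show ?thesis by (intro emeasure_eq_ennreal_measure) auto
qed

lemma superlevel_in_lebesgue: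
  assumes x: "x \<in> \<Omega>"
  shows "{y \<in> \<Omega>. ereal s < \<bar>K x y\<bar>} \<in> sets lebesgue"
proof -
  note [measurable] = K_measurable[OF x]
  have "{y \<in> space (restrict_space borel \<Omega>). ereal s < \<bar>K x y\<bar>} \<in> sets (restrict_space borel \<Omega>)"
    by measurable
  then show ?thesis
    using open_domain by (simp add: sets_restrict_space_iff)
qed

definition g_ext :: "'a \<Rightarrow> 'a \<Rightarrow> real" where
  "g_ext x \<omega> = (if \<omega> \<in> sphere 0 1 then g x \<omega> else 0)"

lemma g_ext_measurable: "x \<in> \<Omega> \<Longrightarrow> g_ext x \<in> borel_measurable borel"
  using g_measurable unfolding g_ext_def by (subst (asm) measurable_restrict_space_iff) auto

lemma abs_g_ext_le: "x \<in> \<Omega> \<Longrightarrow> \<bar>g_ext x \<omega>\<bar> \<le> B"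
  using g_bounded B_nonneg by (simp add: g_ext_def)

text \<open>The integral over S^{n-1} divided by n, written as an integral over the unit ball.\<close>

definition angular_integral :: "'a \<Rightarrow> ennreal" where
  "angular_integral x = (\<integral>\<^sup>+u. indicator (ball 0 1) u * ennreal (\<bar>g_ext x (sgn u)\<bar> powr p') \<partial>lborel)"

lemma sphere_integral_eq_angular_integral:
  assumes x: "x \<in> \<Omega>"
  shows "(\<integral>\<^sup>+\<omega>. ennreal (\<bar>g x \<omega>\<bar> powr p') \<partial>sphere_measure) = ennreal (real DIM('a)) * angular_integral x"
proof -
  note [measurable] = g_ext_measurable[OF x]
  have "space (sphere_measure :: 'a measure) = sphere 0 1"
    by (simp add: sphere_measure_def space_restrict_space space_scale_measure)
  then have "(\<integral>\<^sup>+\<omega>. ennreal (\<bar>g x \<omega>\<bar> powr p') \<partial>sphere_measure)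
      = (\<integral>\<^sup>+\<omega>. ennreal (\<bar>g_ext x \<omega>\<bar> powr p') \<partial>sphere_measure)"
    by (intro nn_integral_cong) (simp add: g_ext_def)
  also have "\<dots> = ennreal (real DIM('a)) * angular_integral x"
    unfolding angular_integral_def by (rule nn_integral_sphere_measure) measurable
  finally show ?thesis .
qed

lemma SUP_sphere_integral_eq:
  "(SUP x\<in>\<Omega>. \<integral>\<^sup>+\<omega>. ennreal (\<bar>g x \<omega>\<bar> powr p') \<partial>sphere_measure) / of_nat DIM('a)
   = (SUP x\<in>\<Omega>. angular_integral x)"
proof -
  have "(SUP x\<in>\<Omega>. \<integral>\<^sup>+\<omega>. ennreal (\<bar>g x \<omega>\<bar> powr p') \<partial>sphere_measure)
      = ennreal (real DIM('a)) * (SUP x\<in>\<Omega>. angular_integral x)"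
    by (simp add: sphere_integral_eq_angular_integral SUP_mult_left_ennreal)
  then show ?thesis
    by (simp add: ennreal_of_nat_eq_real_of_nat mult.commute[of "ennreal _"] mult_divide_eq_ennreal)
qed

lemma angular_integral_le:
  assumes x: "x \<in> \<Omega>"
  shows "angular_integral x \<le> ennreal (B powr p' * measure lborel (ball (0::'a) 1))"
proof -
  have "angular_integral x \<le> (\<integral>\<^sup>+u. ennreal (B powr p') * indicator (ball (0::'a) 1) u \<partial>lborel)"
    unfolding angular_integral_def
    using abs_g_ext_le[OF x] one_le_p'
    by (intro nn_integral_mono) (simp add: indicator_def ennreal_leI powr_mono2)
  also have "\<dots> = ennreal (B powr p') * emeasure lborel (ball (0::'a) 1)"
    by (simp add: nn_integral_cmult_indicator)
  also have "\<dots> = ennreal (B powr p' * measure lborel (ball (0::'a) 1))"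
    by (subst ennreal_mult) (auto simp: emeasure_lborel_ball_eq_measure)
  finally show ?thesis .
qed

definition large_level :: "real \<Rightarrow> bool" where
  "large_level s \<longleftrightarrow> 1 \<le> s \<and> C * s powr (- (\<epsilon> / (2 * q))) \<le> 1 \<and> B + C * D powr \<epsilon> \<le> s powr (1 / 2)"

lemma eventually_large_level: "eventually large_level at_top"
proof -
  have "((\<lambda>s::real. C * s powr (- (\<epsilon> / (2 * q)))) \<longlongrightarrow> 0) at_top"
    using q_pos \<epsilon>_pos by real_asymp
  then have "eventually (\<lambda>s. C * s powr (- (\<epsilon> / (2 * q))) < 1) at_top"
    by (rule order_tendstoD) simp
  moreover have "filterlim (\<lambda>s::real. s powr (1 / 2)) at_top at_top" by real_asymp
  then have "eventually (\<lambda>s. B + C * D powr \<epsilon> \<le> s powr (1 / 2)) at_top"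
    by (simp add: filterlim_at_top)
  ultimately show ?thesis
    unfolding large_level_def using eventually_ge_at_top[of 1] by eventually_elim auto
qed

lemma abs_K_bounds:
  assumes "x \<in> \<Omega>" "y \<in> \<Omega>" "x \<noteq> y"
  obtains v where "K x y = ereal v"
    and "\<bar>g x (sgn (y - x))\<bar> * norm (y - x) powr (- q) - C * norm (y - x) powr (- q + \<epsilon>) \<le> \<bar>v\<bar>"
    and "\<bar>v\<bar> \<le> \<bar>g x (sgn (y - x))\<bar> * norm (y - x) powr (- q) + C * norm (y - x) powr (- q + \<epsilon>)"
proof -
  obtain r where K: "K x y = ereal (g x (sgn (y - x)) * norm (y - x) powr (- q) + r)"
    and r: "\<bar>r\<bar> \<le> C * norm (y - x) powr (- q + \<epsilon>)"
    using K_expansion[OF assms] by blast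
  have "\<bar>g x (sgn (y - x)) * norm (y - x) powr (- q)\<bar> = \<bar>g x (sgn (y - x))\<bar> * norm (y - x) powr (- q)"
    by (simp add: abs_mult)
  then show ?thesis using r by (intro that[OF K]) arith+
qed

lemma superlevel_subset_star_domain:
  assumes s: "large_level s" and x: "x \<in> \<Omega>"
  shows "{y \<in> \<Omega>. ereal s < \<bar>K x y\<bar>}
         \<subseteq> insert x (star_domain x (\<lambda>\<omega>. ((\<bar>g_ext x \<omega>\<bar> + C * s powr (- (\<epsilon> / (2 * q)))) / s) powr (1 / q)))"
proof
  fix y assume "y \<in> {y \<in> \<Omega>. ereal s < \<bar>K x y\<bar>}"
  then have y: "y \<in> \<Omega>" and level: "ereal s < \<bar>K x y\<bar>" by auto
  show "y \<in> insert x (star_domain x (\<lambda>\<omega>. ((\<bar>g_ext x \<omega>\<bar> + C * s powr (- (\<epsilon> / (2 * q)))) / s) powr (1 / q)))"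
  proof (cases "y = x")
    case False
    define r where "r = norm (y - x)"
    define \<omega> where "\<omega> = sgn (y - x)"
    have r: "0 < r" "r \<le> D" using False diameter_le[OF x y] by (auto simp: r_def)
    have \<omega>: "\<omega> \<in> sphere 0 1" using False by (simp add: \<omega>_def norm_sgn)
    obtain v where "K x y = ereal v" "\<bar>v\<bar> \<le> \<bar>g x \<omega>\<bar> * r powr (- q) + C * r powr (- q + \<epsilon>)"
      using abs_K_bounds[OF x y] False unfolding r_def \<omega>_def by metis
    with level have "s < \<bar>g x \<omega>\<bar> * r powr (- q) + C * r powr (- q + \<epsilon>)" by simp
    then have "r < ((\<bar>g x \<omega>\<bar> + C * s powr (- (\<epsilon> / (2 * q)))) / s) powr (1 / q)"
      using s g_bounded[OF x \<omega>] C_nonneg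
      by (intro radius_lt_of_level_lt_sharp[OF q_pos \<epsilon>_pos r]) (auto simp: large_level_def)
    then show ?thesis using False \<omega> by (simp add: star_domain_def g_ext_def r_def \<omega>_def)
  qed simp
qed

lemma star_domain_subset_superlevel:
  assumes s: "large_level s" and x: "x \<in> \<Omega>" and near: "ball x (s powr (- (1 / (2 * q)))) \<subseteq> \<Omega>"
  shows "star_domain x (\<lambda>\<omega>. (max (\<bar>g_ext x \<omega>\<bar> - C * s powr (- (\<epsilon> / (2 * q)))) 0 / s) powr (1 / q))
         \<subseteq> {y \<in> \<Omega>. ereal s < \<bar>K x y\<bar>}"
proof
  fix y assume "y \<in> star_domain x (\<lambda>\<omega>. (max (\<bar>g_ext x \<omega>\<bar> - C * s powr (- (\<epsilon> / (2 * q)))) 0 / s) powr (1 / q))"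
  then have yx: "y \<noteq> x"
    and radius: "norm (y - x) < (max (\<bar>g_ext x (sgn (y - x))\<bar> - C * s powr (- (\<epsilon> / (2 * q)))) 0 / s) powr (1 / q)"
    by (auto simp: star_domain_def)
  define r where "r = norm (y - x)"
  define \<omega> where "\<omega> = sgn (y - x)"
  have r: "0 < r" using yx by (simp add: r_def)
  have \<omega>: "\<omega> \<in> sphere 0 1" using yx by (simp add: \<omega>_def norm_sgn)
  have "0 \<le> C * D powr \<epsilon>" using C_nonneg by simp
  then have "B \<le> s powr (1 / 2)" using s by (simp add: large_level_def)
  then have "r < s powr (- (1 / (2 * q)))" and level: "s < \<bar>g x \<omega>\<bar> * r powr (- q) - C * r powr (- q + \<epsilon>)"
    using level_lt_of_radius_lt[OF q_pos \<epsilon>_pos r abs_ge_zero g_bounded[OF x \<omega>] C_nonneg] radius s \<omega>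
    by (auto simp: large_level_def g_ext_def r_def \<omega>_def)
  then have y: "y \<in> \<Omega>" using near by (auto simp: dist_norm norm_minus_commute r_def)
  obtain v where "K x y = ereal v" "\<bar>g x \<omega>\<bar> * r powr (- q) - C * r powr (- q + \<epsilon>) \<le> \<bar>v\<bar>"
    using abs_K_bounds[OF x y] yx unfolding r_def \<omega>_def by metis
  with level y show "y \<in> {y \<in> \<Omega>. ereal s < \<bar>K x y\<bar>}" by simp
qed


lemma emeasure_superlevel_le:
  assumes s: "large_level s" and x: "x \<in> \<Omega>"
  shows "emeasure lebesgue {y \<in> \<Omega>. ereal s < \<bar>K x y\<bar>}
         \<le> ennreal (s powr (- p')) * (angular_integral x
             + ennreal (p' * (B + 1) powr (p' - 1) * (C * s powr (- (\<epsilon> / (2 * q))))) * emeasure lborel (ball (0::'a) 1))"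
proof -
  note [measurable] = g_ext_measurable[OF x]
  define \<delta> where "\<delta> = C * s powr (- (\<epsilon> / (2 * q)))"
  define L where "L = p' * (B + 1) powr (p' - 1)"
  have \<delta>: "0 \<le> \<delta>" "\<delta> \<le> 1" using s C_nonneg by (auto simp: \<delta>_def large_level_def)
  have "0 \<le> L" using one_le_p' by (simp add: L_def)
  have s_pos: "0 < s" using s by (simp add: large_level_def)
  have "emeasure lebesgue {y \<in> \<Omega>. ereal s < \<bar>K x y\<bar>}
      \<le> emeasure lborel (star_domain x (\<lambda>\<omega>. ((\<bar>g_ext x \<omega>\<bar> + \<delta>) / s) powr (1 / q)))"
    using superlevel_subset_star_domain[OF s x] unfolding \<delta>_def[symmetric]
    by (rule emeasure_lebesgue_le_insert) measurable
  also have "\<dots> = ennreal (s powr (- p')) * (\<integral>\<^sup>+u. indicator (ball 0 1) u * ennreal ((\<bar>g_ext x (sgn u)\<bar> + \<delta>) powr p') \<partial>lborel)"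
    unfolding p'_eq using \<delta>(1) q_pos s_pos by (intro emeasure_star_domain_powr) auto
  also have "\<dots> \<le> ennreal (s powr (- p')) * (\<integral>\<^sup>+u. indicator (ball 0 1) u * ennreal (\<bar>g_ext x (sgn u)\<bar> powr p' + L * \<delta>) \<partial>lborel)"
  proof (intro mult_left_mono nn_integral_mono ennreal_leI)
    fix u :: 'a
    show "(\<bar>g_ext x (sgn u)\<bar> + \<delta>) powr p' \<le> \<bar>g_ext x (sgn u)\<bar> powr p' + L * \<delta>"
      using powr_add_le_Lipschitz[OF abs_ge_zero abs_g_ext_le[OF x] \<delta> one_le_p'] by (simp add: L_def)
  qed auto
  also have "\<dots> = ennreal (s powr (- p')) * (angular_integral x + ennreal (L * \<delta>) * emeasure lborel (ball (0::'a) 1))"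
    unfolding angular_integral_def using \<delta>(1) \<open>0 \<le> L\<close>
    by (subst nn_integral_indicator_add_const) auto
  finally show ?thesis unfolding \<delta>_def L_def .
qed

lemma emeasure_superlevel_ge:
  assumes s: "large_level s" and x: "x \<in> \<Omega>" and near: "ball x (s powr (- (1 / (2 * q)))) \<subseteq> \<Omega>"
  shows "ennreal (s powr (- p')) * angular_integral x
         \<le> emeasure lebesgue {y \<in> \<Omega>. ereal s < \<bar>K x y\<bar>}
           + ennreal (s powr (- p')) * (ennreal (p' * (B + 1) powr (p' - 1) * (C * s powr (- (\<epsilon> / (2 * q)))))
                                         * emeasure lborel (ball (0::'a) 1))"
proof -
  note [measurable] = g_ext_measurable[OF x]
  define \<delta> where "\<delta> = C * s powr (- (\<epsilon> / (2 * q)))"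
  define L where "L = p' * (B + 1) powr (p' - 1)"
  define m where "m \<omega> = max (\<bar>g_ext x \<omega>\<bar> - \<delta>) 0" for \<omega>
  have \<delta>: "0 \<le> \<delta>" "\<delta> \<le> 1" using s C_nonneg by (auto simp: \<delta>_def large_level_def)
  have "0 \<le> L" using one_le_p' by (simp add: L_def)
  have s_pos: "0 < s" using s by (simp add: large_level_def)
  have [measurable]: "m \<in> borel_measurable borel" unfolding m_def by measurable
  have "angular_integral x \<le> (\<integral>\<^sup>+u. indicator (ball 0 1) u * ennreal (m (sgn u) powr p' + L * \<delta>) \<partial>lborel)"
    unfolding angular_integral_def
  proof (intro nn_integral_mono mult_left_mono ennreal_leI)
    fix u :: 'a
    show "\<bar>g_ext x (sgn u)\<bar> powr p' \<le> m (sgn u) powr p' + L * \<delta>"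
      unfolding m_def L_def by (rule powr_le_truncated_add_Lipschitz[OF abs_ge_zero abs_g_ext_le[OF x] \<delta> one_le_p'])
  qed auto
  also have "\<dots> = (\<integral>\<^sup>+u. indicator (ball 0 1) u * ennreal (m (sgn u) powr p') \<partial>lborel)
                  + ennreal (L * \<delta>) * emeasure lborel (ball (0::'a) 1)"
    using \<delta>(1) \<open>0 \<le> L\<close> by (subst nn_integral_indicator_add_const) auto
  finally have "ennreal (s powr (- p')) * angular_integral x
      \<le> ennreal (s powr (- p')) * (\<integral>\<^sup>+u. indicator (ball 0 1) u * ennreal (m (sgn u) powr p') \<partial>lborel)
        + ennreal (s powr (- p')) * (ennreal (L * \<delta>) * emeasure lborel (ball (0::'a) 1))"
    by (simp add: mult_left_mono distrib_left[symmetric])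
  also have "ennreal (s powr (- p')) * (\<integral>\<^sup>+u. indicator (ball 0 1) u * ennreal (m (sgn u) powr p') \<partial>lborel)
      = emeasure lborel (star_domain x (\<lambda>\<omega>. (m \<omega> / s) powr (1 / q)))"
    unfolding p'_eq using q_pos s_pos by (intro emeasure_star_domain_powr[symmetric]) (auto simp: m_def)
  also have "\<dots> \<le> emeasure lebesgue {y \<in> \<Omega>. ereal s < \<bar>K x y\<bar>}"
  proof -
    have star: "star_domain x (\<lambda>\<omega>. (m \<omega> / s) powr (1 / q)) \<in> sets borel" by measurable
    then have "emeasure lborel (star_domain x (\<lambda>\<omega>. (m \<omega> / s) powr (1 / q)))
        = emeasure lebesgue (star_domain x (\<lambda>\<omega>. (m \<omega> / s) powr (1 / q)))" by simp
    also have "\<dots> \<le> emeasure lebesgue {y \<in> \<Omega>. ereal s < \<bar>K x y\<bar>}"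
      using star_domain_subset_superlevel[OF s x near] superlevel_in_lebesgue[OF x]
      by (intro emeasure_mono) (simp_all add: m_def \<delta>_def)
    finally show ?thesis .
  qed
  finally show ?thesis by (simp add: \<delta>_def L_def add_right_mono)
qed

lemma eventually_emeasure_superlevel_ge:
  assumes x: "x \<in> \<Omega>"
  shows "\<forall>\<^sub>F s in at_top. ennreal (s powr (- p')) * angular_integral x
           \<le> emeasure lebesgue {y \<in> \<Omega>. ereal s < \<bar>K x y\<bar>}
             + ennreal (s powr (- p')) * (ennreal (p' * (B + 1) powr (p' - 1) * (C * s powr (- (\<epsilon> / (2 * q)))))
                                           * emeasure lborel (ball (0::'a) 1))"
proof -
  obtain \<eta> where \<eta>: "0 < \<eta>" "ball x \<eta> \<subseteq> \<Omega>" using open_domain x open_contains_ball by blast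
  have "((\<lambda>s::real. s powr (- (1 / (2 * q)))) \<longlongrightarrow> 0) at_top" using q_pos by real_asymp
  then have "\<forall>\<^sub>F s in at_top. s powr (- (1 / (2 * q))) < \<eta>" using \<eta>(1) by (rule order_tendstoD)
  then show ?thesis
    using eventually_large_level
  proof eventually_elim
    case (elim s)
    then have "ball x (s powr (- (1 / (2 * q)))) \<subseteq> \<Omega>" using \<eta>(2) by auto
    then show ?case by (rule emeasure_superlevel_ge[OF elim(2) x])
  qed
qed

lemma emeasure_superlevel_column_le:
  assumes y: "y \<in> \<Omega>" and s: "0 < s"
  shows "emeasure lebesgue {x \<in> \<Omega>. ereal s < \<bar>K x y\<bar>}
         \<le> ennreal ((B + C * D powr \<epsilon>) powr p' * measure lborel (ball (0::'a) 1) * s powr (- p'))"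
proof -
  define M where "M = B + C * D powr \<epsilon>"
  have M: "0 \<le> M" using B_nonneg C_nonneg by (simp add: M_def)
  have "{x \<in> \<Omega>. ereal s < \<bar>K x y\<bar>} \<subseteq> insert y (star_domain y (\<lambda>_. (M / s) powr (1 / q)))"
  proof
    fix x assume "x \<in> {x \<in> \<Omega>. ereal s < \<bar>K x y\<bar>}"
    then have x: "x \<in> \<Omega>" and level: "ereal s < \<bar>K x y\<bar>" by auto
    show "x \<in> insert y (star_domain y (\<lambda>_. (M / s) powr (1 / q)))"
    proof (cases "x = y")
      case False
      define r where "r = norm (y - x)"
      have r: "0 < r" "r \<le> D" using False diameter_le[OF x y] by (auto simp: r_def)
      have \<omega>: "sgn (y - x) \<in> sphere 0 1" using False by (simp add: norm_sgn)
      obtain v where "K x y = ereal v" "\<bar>v\<bar> \<le> \<bar>g x (sgn (y - x))\<bar> * r powr (- q) + C * r powr (- q + \<epsilon>)"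
        using abs_K_bounds[OF x y False] unfolding r_def by metis
      moreover have "\<bar>g x (sgn (y - x))\<bar> * r powr (- q) \<le> B * r powr (- q)"
        using g_bounded[OF x \<omega>] by (intro mult_right_mono) auto
      ultimately have "s < B * r powr (- q) + C * r powr (- q + \<epsilon>)" using level by simp
      then have "r < (M / s) powr (1 / q)"
        unfolding M_def using B_nonneg C_nonneg s by (intro radius_lt_of_level_lt[OF q_pos \<epsilon>_pos r])
      then show ?thesis using False by (simp add: star_domain_def r_def norm_minus_commute)
    qed simp
  qed
  then have "emeasure lebesgue {x \<in> \<Omega>. ereal s < \<bar>K x y\<bar>} \<le> emeasure lborel (star_domain y (\<lambda>_. (M / s) powr (1 / q)))"
    by (rule emeasure_lebesgue_le_insert) measurable
  also have "\<dots> = ennreal (s powr (- p')) * (\<integral>\<^sup>+u. ennreal (M powr p') * indicator (ball (0::'a) 1) u \<partial>lborel)"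
    using emeasure_star_domain_powr[of "\<lambda>_. M" q s y] M q_pos s by (simp add: p'_eq mult.commute)
  also have "\<dots> = ennreal (M powr p' * measure lborel (ball (0::'a) 1) * s powr (- p'))"
    by (simp add: nn_integral_cmult_indicator emeasure_lborel_ball_eq_measure ennreal_mult' mult_ac)
  finally show ?thesis unfolding M_def .
qed


lemma sup_column_superlevel_le:
  "\<exists>M. \<forall>s>0. (SUP y\<in>\<Omega>. emeasure lebesgue {x\<in>\<Omega>. \<bar>K x y\<bar> > ereal s}) \<le> ennreal (M * s powr (- p'))"
  using emeasure_superlevel_column_le by (intro exI allI impI SUP_least) auto

lemma sup_emeasure_superlevel_le_measure:
  "(SUP x\<in>\<Omega>. emeasure lebesgue {y\<in>\<Omega>. ereal s < \<bar>K x y\<bar>}) \<le> ennreal (measure lborel \<Omega>)"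
  unfolding emeasure_domain_eq[symmetric]
proof (rule SUP_least)
  fix x
  have "emeasure lebesgue {y\<in>\<Omega>. ereal s < \<bar>K x y\<bar>} \<le> emeasure lebesgue \<Omega>"
    using open_domain by (intro emeasure_mono) auto
  then show "emeasure lebesgue {y\<in>\<Omega>. ereal s < \<bar>K x y\<bar>} \<le> emeasure lborel \<Omega>"
    using open_domain by simp
qed

lemma sup_emeasure_superlevel_le:
  assumes s: "large_level s"
  shows "(SUP x\<in>\<Omega>. emeasure lebesgue {y\<in>\<Omega>. ereal s < \<bar>K x y\<bar>})
         \<le> ennreal (s powr (- p')) * ((SUP x\<in>\<Omega>. angular_integral x)
             + ennreal (p' * (B + 1) powr (p' - 1) * (C * s powr (- (\<epsilon> / (2 * q))))) * emeasure lborel (ball (0::'a) 1))"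
proof (rule SUP_least)
  fix x assume x: "x \<in> \<Omega>"
  have "angular_integral x \<le> (SUP x\<in>\<Omega>. angular_integral x)" using x by (rule SUP_upper)
  with emeasure_superlevel_le[OF s x]
  show "emeasure lebesgue {y\<in>\<Omega>. ereal s < \<bar>K x y\<bar>}
      \<le> ennreal (s powr (- p')) * ((SUP x\<in>\<Omega>. angular_integral x)
          + ennreal (p' * (B + 1) powr (p' - 1) * (C * s powr (- (\<epsilon> / (2 * q))))) * emeasure lborel (ball (0::'a) 1))"
    by (elim order_trans) (intro mult_left_mono add_right_mono, auto)
qed

lemma angular_integral_attains_SUP:
  assumes x0: "x0 \<in> \<Omega>"
    and attained: "(\<integral>\<^sup>+\<omega>. ennreal (\<bar>g x0 \<omega>\<bar> powr p') \<partial>sphere_measure)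
                   = (SUP x\<in>\<Omega>. \<integral>\<^sup>+\<omega>. ennreal (\<bar>g x \<omega>\<bar> powr p') \<partial>sphere_measure)"
  shows "angular_integral x0 = (SUP x\<in>\<Omega>. angular_integral x)"
proof -
  have "angular_integral x0 = (\<integral>\<^sup>+\<omega>. ennreal (\<bar>g x0 \<omega>\<bar> powr p') \<partial>sphere_measure) / of_nat DIM('a)"
    using sphere_integral_eq_angular_integral[OF x0]
    by (simp add: ennreal_of_nat_eq_real_of_nat mult.commute[of "ennreal _"] mult_divide_eq_ennreal)
  then show ?thesis using attained SUP_sphere_integral_eq by simp
qed

lemma eventually_sup_emeasure_superlevel_ge:
  assumes x0: "x0 \<in> \<Omega>" and max: "angular_integral x0 = (SUP x\<in>\<Omega>. angular_integral x)"
  shows "\<forall>\<^sub>F s in at_top. ennreal (s powr (- p')) * (SUP x\<in>\<Omega>. angular_integral x)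
           \<le> (SUP x\<in>\<Omega>. emeasure lebesgue {y\<in>\<Omega>. ereal s < \<bar>K x y\<bar>})
             + ennreal (s powr (- p')) * (ennreal (p' * (B + 1) powr (p' - 1) * (C * s powr (- (\<epsilon> / (2 * q)))))
                                           * emeasure lborel (ball (0::'a) 1))"
  using eventually_emeasure_superlevel_ge[OF x0]
proof eventually_elim
  case (elim s)
  show ?case unfolding max[symmetric]
    using elim by (rule order_trans) (intro add_right_mono SUP_upper x0)
qed

theorem sup_superlevel_asymptotics:
  assumes A: "A = (SUP x\<in>\<Omega>. \<integral>\<^sup>+ \<omega>. ennreal (\<bar>g x \<omega>\<bar> powr p') \<partial>sphere_measure) / of_nat DIM('a)"
  shows "\<exists>\<sigma>>0. \<exists>C'. \<forall>s>0.
            (SUP x\<in>\<Omega>. emeasure lebesgue {y\<in>\<Omega>. \<bar>K x y\<bar> > ereal s})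
              \<le> A * ennreal (s powr (- p')) + ennreal (C' * s powr (- p' - \<sigma>))
          \<and> ((\<exists>x0\<in>\<Omega>. (\<integral>\<^sup>+ \<omega>. ennreal (\<bar>g x0 \<omega>\<bar> powr p') \<partial>sphere_measure)
                      = (SUP x\<in>\<Omega>. \<integral>\<^sup>+ \<omega>. ennreal (\<bar>g x \<omega>\<bar> powr p') \<partial>sphere_measure))
              \<longrightarrow> A * ennreal (s powr (- p'))
                    \<le> (SUP x\<in>\<Omega>. emeasure lebesgue {y\<in>\<Omega>. \<bar>K x y\<bar> > ereal s})
                      + ennreal (C' * s powr (- p' - \<sigma>)))"
    (is "\<exists>\<sigma>>0. \<exists>C'. \<forall>s>0. ?F s \<le> _ \<and> (?attained \<longrightarrow> _)")
proof -
  define \<sigma> where "\<sigma> = \<epsilon> / (2 * q)"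
  define V where "V = measure lborel (ball (0::'a) 1)"
  define c where "c = p' * (B + 1) powr (p' - 1) * C * V"
  have A_eq: "A = (SUP x\<in>\<Omega>. angular_integral x)" using A SUP_sphere_integral_eq by simp
  have V: "emeasure lborel (ball (0::'a) 1) = ennreal V" "0 \<le> V"
    by (simp_all add: V_def emeasure_lborel_ball_eq_measure)
  have error: "ennreal (s powr (- p')) * (ennreal (p' * (B + 1) powr (p' - 1) * (C * s powr (- \<sigma>)))
                 * emeasure lborel (ball (0::'a) 1)) = ennreal (c * s powr (- p' - \<sigma>))" for s
  proof -
    have "s powr (- p') * (p' * (B + 1) powr (p' - 1) * (C * s powr (- \<sigma>))) * V = c * s powr (- p' - \<sigma>)"
      by (simp add: c_def powr_add[symmetric] mult_ac) (metis minus_diff_commute uminus_add_conv_diff)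
    then show ?thesis using one_le_p' C_nonneg V by (simp add: ennreal_mult[symmetric] mult.assoc)
  qed
  have upper: "?F s \<le> A * ennreal (s powr (- p')) + ennreal (c * s powr (- p' - \<sigma>))" if "large_level s" for s
    using sup_emeasure_superlevel_le[OF that] error[of s] unfolding A_eq \<sigma>_def
    by (simp add: distrib_left mult.commute)
  have lower: "\<forall>\<^sub>F s in at_top. A * ennreal (s powr (- p')) \<le> ?F s + ennreal (c * s powr (- p' - \<sigma>))"
    if attained: ?attained
  proof -
    obtain x0 where "x0 \<in> \<Omega>" "angular_integral x0 = (SUP x\<in>\<Omega>. angular_integral x)"
      using attained angular_integral_attains_SUP by blast
    from eventually_sup_emeasure_superlevel_ge[OF this] show ?thesis
      by eventually_elim (use error in \<open>simp add: A_eq \<sigma>_def mult.commute\<close>)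
  qed
  have ev: "\<forall>\<^sub>F s in at_top. ?F s \<le> A * ennreal (s powr (- p')) + ennreal (c * s powr (- p' - \<sigma>))
          \<and> (?attained \<longrightarrow> A * ennreal (s powr (- p')) \<le> ?F s + ennreal (c * s powr (- p' - \<sigma>)))"
  proof (cases ?attained)
    case True
    from lower[OF True] eventually_large_level show ?thesis by eventually_elim (use upper in auto)
  next
    case False
    from eventually_large_level show ?thesis by eventually_elim (use upper False in auto)
  qed
  have "A \<le> ennreal (B powr p' * V)"
    unfolding A_eq V_def by (rule SUP_least) (rule angular_integral_le)
  then have G_le: "A * ennreal (s powr (- p')) \<le> ennreal (B powr p' * V * s powr (- p'))" for s
    using V(2) by (simp add: ennreal_mult mult_right_mono)
  have "\<exists>C'. \<forall>s>0. ?F s \<le> A * ennreal (s powr (- p')) + ennreal (C' * s powr (- p' - \<sigma>))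
      \<and> (?attained \<longrightarrow> A * ennreal (s powr (- p')) \<le> ?F s + ennreal (C' * s powr (- p' - \<sigma>)))"
    using one_le_p' q_pos \<epsilon>_pos B_nonneg C_nonneg V(2)
    by (intro bounds_for_all_pos_of_eventually[OF _ _ _ _ _ sup_emeasure_superlevel_le_measure G_le ev])
       (auto simp: \<sigma>_def c_def)
  moreover have "0 < \<sigma>" using q_pos \<epsilon>_pos by (simp add: \<sigma>_def)
  ultimately show ?thesis by blast
qed

end

theorem lemma9:
  fixes \<Omega> :: "'a::euclidean_space set"
    and K :: "'a \<Rightarrow> 'a \<Rightarrow> ereal"
    and g :: "'a \<Rightarrow> 'a \<Rightarrow> real"
    and d p p' \<epsilon> :: real
    and A :: ennreal
  assumes "open \<Omega>" and "bounded \<Omega>"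
    and "0 < d" and "d < real DIM('a)"
    and "p = real DIM('a) / d"
    and "1 / p + 1 / p' = 1"
    and "(\<lambda>z. K (fst z) (snd z)) \<in> borel_measurable (restrict_space borel (\<Omega> \<times> \<Omega>))"
    and "(\<lambda>z. g (fst z) (snd z)) \<in> borel_measurable (restrict_space borel (\<Omega> \<times> sphere 0 1))"
    and "\<exists>B. \<forall>x\<in>\<Omega>. \<forall>\<omega>\<in>sphere 0 1. \<bar>g x \<omega>\<bar> \<le> B"
    and "0 < \<epsilon>"
    and "\<exists>C''. \<forall>x\<in>\<Omega>. \<forall>y\<in>\<Omega>. x \<noteq> y \<longrightarrow>
           (\<exists>r. K x y = ereal (g x ((y - x) /\<^sub>R norm (y - x)) * norm (x - y) powr (d - real DIM('a)) + r)
                \<and> \<bar>r\<bar> \<le> C'' * norm (x - y) powr (d - real DIM('a) + \<epsilon>))"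
    and "A = (SUP x\<in>\<Omega>. \<integral>\<^sup>+ \<omega>. ennreal (\<bar>g x \<omega>\<bar> powr p') \<partial>sphere_measure) / of_nat DIM('a)"
  shows "(\<exists>\<sigma>>0. \<exists>C'. \<forall>s>0.
            (SUP x\<in>\<Omega>. emeasure lebesgue {y\<in>\<Omega>. \<bar>K x y\<bar> > ereal s})
              \<le> A * ennreal (s powr (- p')) + ennreal (C' * s powr (- p' - \<sigma>))
          \<and> ((\<exists>x0\<in>\<Omega>. (\<integral>\<^sup>+ \<omega>. ennreal (\<bar>g x0 \<omega>\<bar> powr p') \<partial>sphere_measure)
                      = (SUP x\<in>\<Omega>. \<integral>\<^sup>+ \<omega>. ennreal (\<bar>g x \<omega>\<bar> powr p') \<partial>sphere_measure))
              \<longrightarrow> A * ennreal (s powr (- p'))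
                    \<le> (SUP x\<in>\<Omega>. emeasure lebesgue {y\<in>\<Omega>. \<bar>K x y\<bar> > ereal s})
                      + ennreal (C' * s powr (- p' - \<sigma>))))
       \<and> (\<exists>C. \<forall>s>0. (SUP y\<in>\<Omega>. emeasure lebesgue {x\<in>\<Omega>. \<bar>K x y\<bar> > ereal s})
                      \<le> ennreal (C * s powr (- p')))"
proof -
  define q where "q = real DIM('a) - d"
  obtain B where B: "\<forall>x\<in>\<Omega>. \<forall>\<omega>\<in>sphere 0 1. \<bar>g x \<omega>\<bar> \<le> B" using assms(9) by blast
  obtain C where C: "\<forall>x\<in>\<Omega>. \<forall>y\<in>\<Omega>. x \<noteq> y \<longrightarrow>
      (\<exists>r. K x y = ereal (g x ((y - x) /\<^sub>R norm (y - x)) * norm (x - y) powr (d - real DIM('a)) + r)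
           \<and> \<bar>r\<bar> \<le> C * norm (x - y) powr (d - real DIM('a) + \<epsilon>))"
    using assms(11) by blast
  obtain D where D: "\<forall>x\<in>\<Omega>. \<forall>y\<in>\<Omega>. dist x y \<le> D" using assms(2) bounded_two_points by blast
  interpret singular_kernel \<Omega> K g q \<epsilon> "\<bar>B\<bar>" "\<bar>C\<bar>" D p'
  proof
    fix x y assume xy: "x \<in> \<Omega>" "y \<in> \<Omega>" "x \<noteq> y"
    obtain r where "K x y = ereal (g x ((y - x) /\<^sub>R norm (y - x)) * norm (x - y) powr (d - real DIM('a)) + r)"
      and "\<bar>r\<bar> \<le> C * norm (x - y) powr (d - real DIM('a) + \<epsilon>)"
      using C xy by blast
    moreover have "C * norm (x - y) powr (d - real DIM('a) + \<epsilon>) \<le> \<bar>C\<bar> * norm (x - y) powr (d - real DIM('a) + \<epsilon>)"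
      by (intro mult_right_mono) auto
    ultimately show "\<exists>r. K x y = ereal (g x (sgn (y - x)) * norm (y - x) powr (- q) + r)
        \<and> \<bar>r\<bar> \<le> \<bar>C\<bar> * norm (y - x) powr (- q + \<epsilon>)"
      by (intro exI[of _ r]) (simp add: sgn_div_norm q_def norm_minus_commute)
  qed (use assms(1,3,4,7,8,10) conjugate_exponent_eq[OF assms(3-6)] B D in
       \<open>auto simp: q_def dist_norm norm_minus_commute measurable_restrict_space_slice
             intro: order_trans[OF _ abs_ge_self]\<close>)
  show ?thesis
    using sup_superlevel_asymptotics[OF assms(12)] sup_column_superlevel_le by blast
qed

end
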